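(* Let $p$ be a prime, $s,m$ positive integers, $n=sm$, $c\in\mathbb{F}_{p^s}$, and let $F\in\mathbb{F}_{p^s}[x]$, viewed as a function $\mathbb{F}_{p^n}\to\mathbb{F}_{p^n}$, have $c$-differential uniformity $\delta_{F,c}$. Suppose that no prime $q\leq\delta_{F,c}$ divides $m$. Then for all $a,b\in\mathbb{F}_{p^s}$ (with $a\neq 0$ if $c=1$), the equation $F(x+a)-cF(x)=b$ has no solution $x\in\mathbb{F}_{p^n}\setminus\mathbb{F}_{p^s}$.
   Context: For $F:\mathbb{F}_{p^n}\to\mathbb{F}_{p^n}$ and $c\in\mathbb{F}_{p^n}$, let ${}_c\Delta_F(a,b)=\#\{x\in\mathbb{F}_{p^n}: F(x+a)-cF(x)=b\}$ and the $c$-differential uniformity is $\delta_{F,c}=\max\{{}_c\Delta_F(a,b): a,b\in\mathbb{F}_{p^n},\ a\neq 0\text{ if } c=1\}$. *)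

theory Defs
  imports "HOL-Computational_Algebra.Polynomial" "HOL-Computational_Algebra.Primes"
begin

definition c_diff_count :: "('a::{finite,field} \<Rightarrow> 'a) \<Rightarrow> 'a \<Rightarrow> 'a \<Rightarrow> 'a \<Rightarrow> nat" where
  "c_diff_count F c a b = card {x. F (x + a) - c * F x = b}"

definition c_diff_uniformity :: "('a::{finite,field} \<Rightarrow> 'a) \<Rightarrow> 'a \<Rightarrow> nat" where
  "c_diff_uniformity F c =
     Max {c_diff_count F c a b | a b. c = 1 \<longrightarrow> a \<noteq> 0}"

definition is_subfield :: "'a::field set \<Rightarrow> bool" where
  "is_subfield K \<longleftrightarrow> 0 \<in> K \<and> 1 \<in> K \<and>
     (\<forall>x\<in>K. \<forall>y\<in>K. x + y \<in> K \<and> x * y \<in> K) \<and>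
     (\<forall>x\<in>K. - x \<in> K) \<and> (\<forall>x\<in>K. x \<noteq> 0 \<longrightarrow> inverse x \<in> K)"

end

theory Submission
  imports Defs "HOL-Combinatorics.Cycles"
begin

text \<open>
  The Frobenius map \<open>y \<mapsto> y^|K|\<close> is a field automorphism whose fixed
  points are exactly \<open>K\<close>, and its \<open>m\<close>-th power is the identity. Since \<open>a\<close>, \<open>b\<close>,
  \<open>c\<close> and the coefficients of \<open>F\<close> lie in \<open>K\<close>, it permutes the solution set \<open>S\<close> of
  \<open>F(x + a) - c F(x) = b\<close>. A solution outside \<open>K\<close> therefore has an orbit of length
  \<open>d > 1\<close> with \<open>d | m\<close> and \<open>d \<le> |S| \<le> \<delta>\<^sub>F\<^sub>,\<^sub>c\<close>, and every prime factor of
  \<open>d\<close> contradicts the hypothesis on \<open>m\<close>.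
\<close>

lemma CHAR_dvd_card:
  "CHAR('a::{finite,ring_1}) dvd card (UNIV :: 'a set)"
proof -
  \<comment> \<open>Translation by \<open>1\<close> permutes the ring, so \<open>|R| \<cdot> 1 = 0\<close>.\<close>
  have "(\<Sum>y\<in>UNIV. 1 + y) = (\<Sum>y\<in>UNIV. y :: 'a)"
    by (rule sum.reindex_bij_witness[of _ "\<lambda>y. y - 1" "\<lambda>y. 1 + y"]) auto
  then have "of_nat (card (UNIV :: 'a set)) = (0 :: 'a)"
    by (simp add: sum.distrib)
  then show ?thesis
    by (simp add: of_nat_eq_0_iff_char_dvd)
qed

lemma CHAR_eq_if_card_prime_power:
  assumes "prime p" and "n > 0" and "card (UNIV :: 'a::{finite,idom} set) = p ^ n"
  shows "CHAR('a) = p"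
proof -
  have "prime CHAR('a)"
    by (intro prime_CHAR_semidom finite_imp_CHAR_pos) simp
  moreover have "CHAR('a) dvd p ^ n"
    using CHAR_dvd_card[where 'a = 'a] assms(3) by simp
  ultimately have "CHAR('a) dvd p"
    using prime_dvd_power by blast
  with \<open>prime CHAR('a)\<close> show ?thesis
    using assms(1) by (simp add: primes_dvd_imp_eq)
qed

lemma freshmans_dream_diff:
  assumes "prime CHAR('a::comm_ring_1)" and "m = CHAR('a) ^ k"
  shows "(x - y :: 'a) ^ m = x ^ m - y ^ m"
  using freshmans_dream'[OF assms, of "x - y" y] by (simp add: algebra_simps)

lemma poly_frobenius:
  fixes f :: "'a::comm_semiring_1 poly"
  assumes "prime CHAR('a)" and "m = CHAR('a) ^ k" and "\<forall>i. coeff f i ^ m = coeff f i"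
  shows "poly f (y ^ m) = poly f y ^ m"
proof -
  have "poly f y ^ m = (\<Sum>i\<le>degree f. (coeff f i * y ^ i) ^ m)"
    unfolding poly_altdef by (rule freshmans_dream_sum'[OF assms(1,2)])
  also have "\<dots> = (\<Sum>i\<le>degree f. coeff f i * (y ^ m) ^ i)"
    using assms(3) by (simp add: power_mult_distrib mult.commute flip: power_mult)
  finally show ?thesis
    by (simp add: poly_altdef)
qed

lemma c_diff_equation_frobenius:
  fixes f :: "'a::comm_ring_1 poly"
  assumes "prime CHAR('a)" and "m = CHAR('a) ^ k" and "\<forall>i. coeff f i ^ m = coeff f i"
    and "a ^ m = a" and "b ^ m = b" and "c ^ m = c"
    and "poly f (x + a) - c * poly f x = b"
  shows "poly f (x ^ m + a) - c * poly f (x ^ m) = b"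
proof -
  have "poly f (x ^ m + a) - c * poly f (x ^ m) = poly f ((x + a) ^ m) - c ^ m * poly f (x ^ m)"
    using assms(1,2,4,6) by (simp add: freshmans_dream')
  also have "\<dots> = (poly f (x + a) - c * poly f x) ^ m"
    by (simp add: poly_frobenius[OF assms(1-3)] freshmans_dream_diff[OF assms(1,2)]
        power_mult_distrib)
  also have "\<dots> = b"
    using assms(5,7) by simp
  finally show ?thesis .
qed

lemma permutation_frobenius:
  assumes "prime CHAR('a::{finite,idom})" and "m = CHAR('a) ^ k"
  shows "permutation (\<lambda>x::'a. x ^ m)"
proof -
  have "inj (\<lambda>x::'a. x ^ m)"
  proof (rule injI)
    fix x y :: 'a
    assume "x ^ m = y ^ m"
    then have "(x - y) ^ m = 0"
      by (simp add: freshmans_dream_diff[OF assms])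
    then show "x = y"
      by simp
  qed
  then show ?thesis
    by (simp add: permutation finite_UNIV_inj_surj bij_def)
qed

lemma funpow_power_map:
  "((\<lambda>x. x ^ q) ^^ i) (y :: 'a::monoid_mult) = y ^ (q ^ i)"
  by (induction i) (simp_all add: power_mult mult.commute flip: power_mult)

lemma power_card_subfield:
  fixes K :: "'a::field set"
  assumes K: "is_subfield K" "finite K" and x: "x \<in> K"
  shows "x ^ card K = x"
proof (cases "x = 0")
  case False
  have closed: "\<And>u v. u \<in> K \<Longrightarrow> v \<in> K \<Longrightarrow> u * v \<in> K"
    and inverse: "\<And>u. u \<in> K \<Longrightarrow> u \<noteq> 0 \<Longrightarrow> inverse u \<in> K"
    and "0 \<in> K"
    using K(1) unfolding is_subfield_def by auto
  then have card_pos: "card K > 0" and card_units: "card (K - {0}) = card K - 1"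
    using K(2) by (auto simp: card_gt_0_iff)
  have "x * (\<Prod>y\<in>K-{0}. x * y) = x ^ card K * \<Prod>(K-{0})"
    using card_pos by (simp add: prod.distrib card_units flip: power_Suc)
  also have "(\<Prod>y\<in>K-{0}. x * y) = \<Prod>(K-{0})"
    by (rule prod.reindex_bij_witness[of _ "\<lambda>y. y / x" "\<lambda>y. x * y"])
       (use False x closed inverse in \<open>auto simp: divide_inverse\<close>)
  finally show ?thesis
    using K(2) by (simp add: prod_zero_iff)
qed (use K in \<open>auto simp: is_subfield_def card_gt_0_iff\<close>)

lemma power_card_subfield_iff:
  fixes K :: "'a::field set"
  assumes K: "is_subfield K" "finite K"
  shows "y ^ card K = y \<longleftrightarrow> y \<in> K"
proof
  define P :: "'a poly" where "P = monom 1 (card K) - monom 1 1"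
  have poly_P: "poly P z = z ^ card K - z" for z
    by (simp add: P_def poly_monom)
  have "{0, 1} \<subseteq> K"
    using K(1) by (simp add: is_subfield_def)
  then have card_gt_1: "card K > 1"
    using K(2) card_mono[of K "{0, 1}"] by simp
  then have "P \<noteq> 0"
    by (auto simp: P_def dest!: arg_cong[of _ _ "\<lambda>P. coeff P (card K)"])
  have "degree P \<le> card K"
    unfolding P_def using card_gt_1
    by (intro degree_diff_le) (auto intro: order_trans[OF degree_monom_le])
  with \<open>P \<noteq> 0\<close> have "card {z. poly P z = 0} \<le> card K"
    using card_poly_roots_bound[of P] by simp
  moreover have "K \<subseteq> {z. poly P z = 0}"
    using power_card_subfield[OF K] by (simp add: poly_P subset_eq)
  ultimately have "K = {z. poly P z = 0}"
    using poly_roots_finite[OF \<open>P \<noteq> 0\<close>]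
    by (intro card_subset_eq) (auto dest: card_mono)
  moreover assume "y ^ card K = y"
  then have "poly P y = 0"
    by (simp add: poly_P)
  ultimately show "y \<in> K"
    by blast
qed (rule power_card_subfield[OF K])

lemma least_power_le_card:
  assumes "permutation p" and "finite S" and "p ` S \<subseteq> S" and "a \<in> S"
  shows "least_power p a \<le> card S"
proof -
  have "set (support p a) \<subseteq> S"
  proof -
    have "(p ^^ i) a \<in> S" for i
      by (induction i) (use assms(3,4) in auto)
    then show ?thesis
      by auto
  qed
  then have "card (set (support p a)) \<le> card S"
    using assms(2) by (rule card_mono[rotated])
  then show ?thesis
    using distinct_card[OF cycle_of_permutation[OF assms(1)]] by simp
qed

lemma prime_dvd_period_le_card:
  assumes "permutation p" and "finite S" and "p ` S \<subseteq> S" and "a \<in> S"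
    and "(p ^^ m) a = a" and "p a \<noteq> a"
  obtains q where "prime q" and "q dvd m" and "q \<le> card S"
proof -
  have "least_power p a > 1"
    using least_power_gt_one[OF assms(1,6)] by simp
  then obtain q where q: "prime q" "q dvd least_power p a"
    using prime_factor_nat by (metis less_irrefl)
  moreover have "least_power p a dvd m"
    using least_power_dvd[OF assms(1)] assms(5) by simp
  moreover have "q \<le> least_power p a"
    using q(2) \<open>least_power p a > 1\<close> by (simp add: dvd_imp_le)
  ultimately show ?thesis
    using least_power_le_card[OF assms(1-4)] by (meson dvd_trans le_trans that)
qed

lemma c_diff_count_le_uniformity:
  assumes "c = 1 \<longrightarrow> a \<noteq> 0"
  shows "c_diff_count F c a b \<le> c_diff_uniformity F c"
proof -
  have "finite {c_diff_count F c a b | a b. c = 1 \<longrightarrow> a \<noteq> 0}"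
    by (rule finite_subset[of _ "(\<lambda>(a, b). c_diff_count F c a b) ` UNIV"]) auto
  then show ?thesis
    unfolding c_diff_uniformity_def using assms by (auto intro!: Max_ge)
qed

theorem proposition2p4:
  fixes p s m n :: nat
    and K :: "'a::{finite,field} set"
    and f :: "'a poly"
    and c :: 'a
  assumes "prime p" and "s > 0" and "m > 0" and "n = s * m"
    and "card (UNIV :: 'a set) = p ^ n"
    and "is_subfield K" and "card K = p ^ s"
    and "\<forall>i. coeff f i \<in> K"
    and "c \<in> K"
    and "\<forall>q::nat. prime q \<and> q \<le> c_diff_uniformity (poly f) c \<longrightarrow> \<not> q dvd m"
  shows "\<forall>a\<in>K. \<forall>b\<in>K. (c = 1 \<longrightarrow> a \<noteq> 0) \<longrightarrow>
           \<not> (\<exists>x. x \<notin> K \<and> poly f (x + a) - c * poly f x = b)"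
proof (intro ballI impI notI)
  fix a b
  assume a: "a \<in> K" and b: "b \<in> K" and a_nonzero: "c = 1 \<longrightarrow> a \<noteq> 0"
    and "\<exists>x. x \<notin> K \<and> poly f (x + a) - c * poly f x = b"
  then obtain x where x: "x \<notin> K" "poly f (x + a) - c * poly f x = b"
    by blast
  define frob where "frob = (\<lambda>y::'a. y ^ card K)"
  define S where "S = {y. poly f (y + a) - c * poly f y = b}"
  have char: "prime CHAR('a)" "card K = CHAR('a) ^ s"
    using CHAR_eq_if_card_prime_power[OF assms(1) _ assms(5)] assms(1-4,7) by simp_all
  have fixed: "z ^ card K = z" if "z \<in> K" for z
    using power_card_subfield[OF assms(6) _ that] by simp
  have perm: "permutation frob"
    unfolding frob_def by (rule permutation_frobenius[OF char])
  have invariant: "frob ` S \<subseteq> S"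
    using c_diff_equation_frobenius[OF char] fixed assms(8,9) a b by (auto simp: frob_def S_def)
  have period: "(frob ^^ m) x = x"
    using power_card_subfield[of UNIV x] assms(4,5,7)
    by (simp add: frob_def funpow_power_map is_subfield_def power_mult)
  have moved: "frob x \<noteq> x"
    using power_card_subfield_iff[OF assms(6)] x(1) by (simp add: frob_def)
  have "finite S" and "x \<in> S"
    using x(2) by (simp_all add: S_def)
  then obtain q where q: "prime q" "q dvd m" "q \<le> card S"
    using prime_dvd_period_le_card[OF perm _ invariant _ period moved] by blast
  moreover have "card S \<le> c_diff_uniformity (poly f) c"
    using c_diff_count_le_uniformity[OF a_nonzero] by (simp add: S_def c_diff_count_def)
  ultimately show False
    using assms(10) by auto
qed

end
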